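(* Let $(\Omega,\mathscr{F},\mu)$ be a complete probability space, $K\subset L^{0}(\mu)$ absolutely convex, closed in probability and bounded in probability, and $E_K=\mathrm{span}(K)$. Let $\tau$ be a locally convex equicontinuous Köthe topology on $E_K$ with the Krein-Šmulian property which is $F$-regular. Then for every $g\in F$ the set $\{fg:f\in K\}$ is uniformly $\mu$-integrable.
   Context: $L^{0}(\mu)$ carries the topology of convergence in probability. The polar of $C\subset L^{0}(\mu)$ is $C^{\circ}=\{g\in L^{0}(\mu):\sup_{f\in C}\int_\Omega|fg|\,d\mu\leq1\}$; set $E'_K=\mathrm{span}(K^{\circ})$, paired with $E_K$ via $\langle f,g\rangle=\int_\Omega fg\,d\mu$; for $F\subset E'_K$, $\sigma(E_K,F)$ is the associated weak topology on $E_K$. A set is $K$-bounded if it lies in $\lambda K$ for some $\lambda>0$. A topology $\tau$ on $E_K$ is an equicontinuous Köthe topology if $K$ is $\tau$-compact and $\tau$ restricted to $K$-bounded sets equals $\sigma(E_K,F)$ for some $F\subset E'_K$ that is solid, separates the points of $E_K$, and contains a strictly positive element; $F$ is then said to induce $\tau$. Such $\tau$ has the Krein-Šmulian property if a convex set $C\subset E_K$ is $\tau$-closed iff $C\cap\lambda K$ is $\tau$-closed for each $\lambda>0$. Under the Krein-Šmulian property, each $g\in F$ gives a $\tau$-continuous functional $f\mapsto\int_\Omega fg\,d\mu$, yielding a natural map $F\to(E_K,\tau)^{\ast}$; $\tau$ is $F$-regular if $F$ induces $\tau$ and this map is surjective. *)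

theory Defs
  imports "HOL-Probability.Probability"
begin

text \<open>Elements of L0(mu) are represented by real-valued measurable functions; sets of
  L0-elements are represented by sets of representatives that are saturated under
  a.e. equality, topologies on subsets of L0 by topologies whose open sets are saturated.\<close>

definition ae_saturated :: "'a measure \<Rightarrow> ('a \<Rightarrow> real) set \<Rightarrow> bool" where
  "ae_saturated M S \<longleftrightarrow> S \<subseteq> borel_measurable M \<and>
     (\<forall>f\<in>S. \<forall>h\<in>borel_measurable M. (AE x in M. h x = f x) \<longrightarrow> h \<in> S)"

definition lin_span :: "('a \<Rightarrow> real) set \<Rightarrow> ('a \<Rightarrow> real) set" where
  "lin_span S = {f. \<exists>(I::nat set) c v. finite I \<and> v ` I \<subseteq> S \<and> f = (\<lambda>x. \<Sum>i\<in>I. c i * v i x)}"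

definition L0_span :: "'a measure \<Rightarrow> ('a \<Rightarrow> real) set \<Rightarrow> ('a \<Rightarrow> real) set" where
  "L0_span M S = {h \<in> borel_measurable M. \<exists>f\<in>lin_span S. AE x in M. h x = f x}"

definition E_K :: "'a measure \<Rightarrow> ('a \<Rightarrow> real) set \<Rightarrow> ('a \<Rightarrow> real) set" where
  "E_K M K = L0_span M K"

definition polar :: "'a measure \<Rightarrow> ('a \<Rightarrow> real) set \<Rightarrow> ('a \<Rightarrow> real) set" where
  "polar M C = {g \<in> borel_measurable M. \<forall>f\<in>C. (\<integral>\<^sup>+x. ennreal \<bar>f x * g x\<bar> \<partial>M) \<le> 1}"

definition E'_K :: "'a measure \<Rightarrow> ('a \<Rightarrow> real) set \<Rightarrow> ('a \<Rightarrow> real) set" where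
  "E'_K M K = L0_span M (polar M K)"

definition pairing :: "'a measure \<Rightarrow> ('a \<Rightarrow> real) \<Rightarrow> ('a \<Rightarrow> real) \<Rightarrow> real" where
  "pairing M f g = (\<integral>x. f x * g x \<partial>M)"

definition conv_in_prob :: "'a measure \<Rightarrow> (nat \<Rightarrow> 'a \<Rightarrow> real) \<Rightarrow> ('a \<Rightarrow> real) \<Rightarrow> bool" where
  "conv_in_prob M fs f \<longleftrightarrow>
     (\<forall>e>0. (\<lambda>n. measure M {x \<in> space M. e < \<bar>fs n x - f x\<bar>}) \<longlonglongrightarrow> 0)"

text \<open>Closed for the (metrizable) topology of convergence in probability.\<close>
definition closed_in_prob :: "'a measure \<Rightarrow> ('a \<Rightarrow> real) set \<Rightarrow> bool" where
  "closed_in_prob M K \<longleftrightarrow> (\<forall>fs f. (\<forall>n. fs n \<in> K) \<and> f \<in> borel_measurable M \<and> conv_in_prob M fs f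
       \<longrightarrow> f \<in> K)"

definition bounded_in_prob :: "'a measure \<Rightarrow> ('a \<Rightarrow> real) set \<Rightarrow> bool" where
  "bounded_in_prob M K \<longleftrightarrow> (\<forall>e>0. \<exists>c. \<forall>f\<in>K. measure M {x \<in> space M. c < \<bar>f x\<bar>} \<le> e)"

definition absolutely_convex :: "('a \<Rightarrow> real) set \<Rightarrow> bool" where
  "absolutely_convex K \<longleftrightarrow>
     (\<forall>f\<in>K. \<forall>g\<in>K. \<forall>a b. \<bar>a\<bar> + \<bar>b\<bar> \<le> 1 \<longrightarrow> (\<lambda>x. a * f x + b * g x) \<in> K)"

definition convex_fun_set :: "('a \<Rightarrow> real) set \<Rightarrow> bool" where
  "convex_fun_set C \<longleftrightarrow>
     (\<forall>f\<in>C. \<forall>g\<in>C. \<forall>t::real. 0 \<le> t \<and> t \<le> 1 \<longrightarrow> (\<lambda>x. t * f x + (1 - t) * g x) \<in> C)"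

definition scaleset :: "real \<Rightarrow> ('a \<Rightarrow> real) set \<Rightarrow> ('a \<Rightarrow> real) set" where
  "scaleset c S = {(\<lambda>x. c * f x) | f. f \<in> S}"

definition K_bounded :: "('a \<Rightarrow> real) set \<Rightarrow> ('a \<Rightarrow> real) set \<Rightarrow> bool" where
  "K_bounded K B \<longleftrightarrow> (\<exists>l>0. B \<subseteq> scaleset l K)"

definition weak_top :: "'a measure \<Rightarrow> ('a \<Rightarrow> real) set \<Rightarrow> ('a \<Rightarrow> real) set \<Rightarrow> ('a \<Rightarrow> real) topology" where
  "weak_top M E F = topology_generated_by
     (insert E {{f \<in> E. pairing M f g \<in> U} | g U. g \<in> F \<and> open U})"

definition solid :: "'a measure \<Rightarrow> ('a \<Rightarrow> real) set \<Rightarrow> bool" where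
  "solid M F \<longleftrightarrow> (\<forall>g\<in>F. \<forall>h\<in>borel_measurable M. (AE x in M. \<bar>h x\<bar> \<le> \<bar>g x\<bar>) \<longrightarrow> h \<in> F)"

definition separates :: "'a measure \<Rightarrow> ('a \<Rightarrow> real) set \<Rightarrow> ('a \<Rightarrow> real) set \<Rightarrow> bool" where
  "separates M E F \<longleftrightarrow> (\<forall>f\<in>E. (\<forall>g\<in>F. pairing M f g = 0) \<longrightarrow> (AE x in M. f x = 0))"

definition has_strictly_positive :: "'a measure \<Rightarrow> ('a \<Rightarrow> real) set \<Rightarrow> bool" where
  "has_strictly_positive M F \<longleftrightarrow> (\<exists>g\<in>F. AE x in M. 0 < g x)"

definition L0_topology :: "'a measure \<Rightarrow> ('a \<Rightarrow> real) set \<Rightarrow> ('a \<Rightarrow> real) topology \<Rightarrow> bool" where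
  "L0_topology M E \<tau> \<longleftrightarrow> topspace \<tau> = E \<and>
     (\<forall>U. openin \<tau> U \<longrightarrow> (\<forall>f\<in>U. \<forall>h\<in>E. (AE x in M. h x = f x) \<longrightarrow> h \<in> U))"

definition locally_convex_top :: "('a \<Rightarrow> real) set \<Rightarrow> ('a \<Rightarrow> real) topology \<Rightarrow> bool" where
  "locally_convex_top E \<tau> \<longleftrightarrow>
     continuous_map (prod_topology \<tau> \<tau>) \<tau> (\<lambda>(f, g). \<lambda>x. f x + g x) \<and>
     continuous_map (prod_topology euclideanreal \<tau>) \<tau> (\<lambda>(c, f). \<lambda>x. c * f x) \<and>
     (\<forall>U f. openin \<tau> U \<and> f \<in> U \<longrightarrow> (\<exists>V. openin \<tau> V \<and> f \<in> V \<and> V \<subseteq> U \<and> convex_fun_set V))"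

definition induces :: "'a measure \<Rightarrow> ('a \<Rightarrow> real) set \<Rightarrow> ('a \<Rightarrow> real) topology \<Rightarrow> ('a \<Rightarrow> real) set \<Rightarrow> bool" where
  "induces M K \<tau> F \<longleftrightarrow> F \<subseteq> E'_K M K \<and> solid M F \<and> separates M (E_K M K) F \<and>
     has_strictly_positive M F \<and>
     (\<forall>B. K_bounded K B \<longrightarrow> subtopology \<tau> B = subtopology (weak_top M (E_K M K) F) B)"

definition equicontinuous_Koethe :: "'a measure \<Rightarrow> ('a \<Rightarrow> real) set \<Rightarrow> ('a \<Rightarrow> real) topology \<Rightarrow> bool" where
  "equicontinuous_Koethe M K \<tau> \<longleftrightarrow> compactin \<tau> K \<and> (\<exists>F. induces M K \<tau> F)"

definition Krein_Smulian :: "'a measure \<Rightarrow> ('a \<Rightarrow> real) set \<Rightarrow> ('a \<Rightarrow> real) topology \<Rightarrow> bool" where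
  "Krein_Smulian M K \<tau> \<longleftrightarrow> (\<forall>C. C \<subseteq> E_K M K \<and> ae_saturated M C \<and> convex_fun_set C \<longrightarrow>
     (closedin \<tau> C \<longleftrightarrow> (\<forall>l>0. closedin \<tau> (C \<inter> scaleset l K))))"

definition F_regular :: "'a measure \<Rightarrow> ('a \<Rightarrow> real) set \<Rightarrow> ('a \<Rightarrow> real) topology \<Rightarrow> ('a \<Rightarrow> real) set \<Rightarrow> bool" where
  "F_regular M K \<tau> F \<longleftrightarrow> induces M K \<tau> F \<and>
     (\<forall>\<phi>. continuous_map \<tau> euclideanreal \<phi> \<and>
        (\<forall>f\<in>E_K M K. \<forall>g\<in>E_K M K. \<phi> (\<lambda>x. f x + g x) = \<phi> f + \<phi> g) \<and>
        (\<forall>c. \<forall>f\<in>E_K M K. \<phi> (\<lambda>x. c * f x) = c * \<phi> f)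
      \<longrightarrow> (\<exists>g\<in>F. \<forall>f\<in>E_K M K. \<phi> f = pairing M f g))"

definition uniformly_integrable :: "'a measure \<Rightarrow> ('a \<Rightarrow> real) set \<Rightarrow> bool" where
  "uniformly_integrable M H \<longleftrightarrow>
     (\<forall>e>0. \<exists>c. \<forall>h\<in>H. (\<integral>\<^sup>+x\<in>{x \<in> space M. c < \<bar>h x\<bar>}. ennreal \<bar>h x\<bar> \<partial>M) \<le> ennreal e)"

end

theory Submission
  imports Defs "HOL-Library.Diagonal_Subsequence"
begin

(*
  Fix g in F and write nu_f(A) = integral over A of f g.  Since F is solid, indicator A * g lies
  in F, so f |-> nu_f(A) is sigma(E_K, F)-continuous; as tau agrees with sigma(E_K, F) on K,
  K is compact for the topology of setwise convergence of the signed measures nu_f.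

  If these measures were not uniformly absolutely continuous, we could pick f_m in K and pairwise
  disjoint sets D_m with |nu_{f_m}(D_m)| >= e/2.  Compactness and a diagonal argument give a
  subsequence such that nu_{f_m}(union of D_m over J) converges to nu_{f_0}(same set) for every
  J, and the gliding hump argument (Phillips' lemma) then forces nu_{f_m}(D_m) -> 0 along it,
  a contradiction.  Uniform absolute continuity and the L1 bound coming from g in span(K polar)
  give uniform integrability.
*)

lemma integrable_imp_set_integrable:
  "integrable M h \<Longrightarrow> A \<in> sets M \<Longrightarrow> set_integrable M A (h :: 'a \<Rightarrow> real)"
  unfolding set_integrable_def by (rule integrable_mult_indicator)

lemma sets_UN_nat:
  fixes D :: "nat \<Rightarrow> 'a set"
  shows "(\<And>m. D m \<in> sets M) \<Longrightarrow> (\<Union>m\<in>J. D m) \<in> sets M"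
  by (intro sets.countable_UN') auto

lemma abs_set_integral_le_superset:
  fixes h :: "'a \<Rightarrow> real"
  assumes "integrable M h" "A \<in> sets M" "B \<in> sets M" "A \<subseteq> B"
  shows "\<bar>\<integral>x\<in>A. h x \<partial>M\<bar> \<le> (\<integral>x\<in>B. \<bar>h x\<bar> \<partial>M)"
proof -
  have "\<bar>\<integral>x\<in>A. h x \<partial>M\<bar> \<le> (\<integral>x\<in>A. \<bar>h x\<bar> \<partial>M)"
    using set_integral_norm_bound[OF integrable_imp_set_integrable[OF assms(1,2)]] by simp
  also have "\<dots> \<le> (\<integral>x\<in>B. \<bar>h x\<bar> \<partial>M)"
    using assms unfolding set_lebesgue_integral_def
    by (intro integral_mono integrable_mult_indicator integrable_abs) (auto split: split_indicator)
  finally show ?thesis .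
qed

lemma abs_set_integral_le_Diff:
  fixes h :: "'a \<Rightarrow> real"
  assumes h: "integrable M h" and S: "S \<in> sets M" and R: "R \<in> sets M"
  shows "\<bar>\<integral>x\<in>S. h x \<partial>M\<bar> \<le> \<bar>\<integral>x\<in>S - R. h x \<partial>M\<bar> + (\<integral>x\<in>R. \<bar>h x\<bar> \<partial>M)"
proof -
  have "(S - R) \<inter> (S \<inter> R) = {}"
    by blast
  then have "(\<integral>x\<in>S. h x \<partial>M) = (\<integral>x\<in>S - R. h x \<partial>M) + (\<integral>x\<in>S \<inter> R. h x \<partial>M)"
    using set_integral_Un[of "S - R" "S \<inter> R" M h] integrable_imp_set_integrable[OF h] S R
    by (simp add: Un_Diff_Int)
  moreover have "\<bar>\<integral>x\<in>S \<inter> R. h x \<partial>M\<bar> \<le> (\<integral>x\<in>R. \<bar>h x\<bar> \<partial>M)"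
    using S R by (intro abs_set_integral_le_superset[OF h]) auto
  ultimately show ?thesis
    by linarith
qed

lemma set_integral_abs_le_double:
  fixes h :: "'a \<Rightarrow> real"
  assumes h: "integrable M h" and A: "A \<in> sets M"
    and small: "\<And>B. B \<in> sets M \<Longrightarrow> B \<subseteq> A \<Longrightarrow> \<bar>\<integral>x\<in>B. h x \<partial>M\<bar> \<le> e"
  shows "(\<integral>x\<in>A. \<bar>h x\<bar> \<partial>M) \<le> 2 * e"
proof -
  have [measurable]: "h \<in> borel_measurable M"
    using h by auto
  define P where "P = {x \<in> space M. 0 \<le> h x}"
  have P: "P \<in> sets M"
    unfolding P_def by measurable
  have "(\<integral>x\<in>A. \<bar>h x\<bar> \<partial>M) = (\<integral>x. indicator (A \<inter> P) x * h x - indicator (A - P) x * h x \<partial>M)"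
    unfolding set_lebesgue_integral_def
    by (intro Bochner_Integration.integral_cong) (auto simp: P_def split: split_indicator)
  also have "\<dots> = (\<integral>x\<in>A \<inter> P. h x \<partial>M) - (\<integral>x\<in>A - P. h x \<partial>M)"
    unfolding set_lebesgue_integral_def real_scaleR_def using h A P
    by (intro Bochner_Integration.integral_diff) (auto intro: integrable_real_mult_indicator simp: mult.commute)
  finally show ?thesis
    using small[of "A \<inter> P"] small[of "A - P"] A P by auto
qed

lemma integral_excess_tendsto_0:
  fixes h :: "'a \<Rightarrow> real"
  assumes h: "integrable M h"
  shows "(\<lambda>n. \<integral>x. \<bar>h x\<bar> - min \<bar>h x\<bar> (real n) \<partial>M) \<longlonglongrightarrow> 0"
proof -
  have "(\<lambda>n. \<integral>x. \<bar>h x\<bar> - min \<bar>h x\<bar> (real n) \<partial>M) \<longlonglongrightarrow> (\<integral>x. 0 \<partial>M)"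
  proof (rule integral_dominated_convergence[where w="\<lambda>x. \<bar>h x\<bar>"])
    show "AE x in M. (\<lambda>n. \<bar>h x\<bar> - min \<bar>h x\<bar> (real n)) \<longlonglongrightarrow> 0"
    proof (rule AE_I2)
      fix x
      obtain N where "\<bar>h x\<bar> \<le> real N"
        using real_arch_simple by blast
      then have "\<forall>n\<ge>N. \<bar>h x\<bar> - min \<bar>h x\<bar> (real n) = 0"
        by auto
      then show "(\<lambda>n. \<bar>h x\<bar> - min \<bar>h x\<bar> (real n)) \<longlonglongrightarrow> 0"
        by (intro tendsto_eventually) (auto simp: eventually_sequentially)
    qed
  qed (use h in auto)
  then show ?thesis
    by simp
qed

lemma (in finite_measure) set_integral_abs_continuous:
  fixes h :: "'a \<Rightarrow> real"
  assumes h: "integrable M h" and "e > 0"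
  shows "\<exists>d>0. \<forall>A\<in>sets M. measure M A < d \<longrightarrow> (\<integral>x\<in>A. \<bar>h x\<bar> \<partial>M) < e"
proof -
  define excess where "excess n x = \<bar>h x\<bar> - min \<bar>h x\<bar> (real n)" for n x
  have excess_integrable: "integrable M (excess n)" for n
    unfolding excess_def using h by (intro Bochner_Integration.integrable_bound[OF integrable_abs[OF h]]) auto
  have "\<forall>\<^sub>F n in sequentially. (\<integral>x. excess n x \<partial>M) < e/2"
    using \<open>e > 0\<close> unfolding excess_def by (intro order_tendstoD(2)[OF integral_excess_tendsto_0[OF h]]) auto
  then obtain n where n: "(\<integral>x. excess n x \<partial>M) < e/2"
    unfolding eventually_sequentially by blast
  \<comment> \<open>|h| \<le> n + excess n, so a set of measure < d carries less than n d + e/2 of |h|\<close>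
  define d where "d = e / (2 * (real n + 1))"
  have "(\<integral>x\<in>A. \<bar>h x\<bar> \<partial>M) < e" if A: "A \<in> sets M" "measure M A < d" for A
  proof -
    have indicator_integrable: "integrable M (\<lambda>x. indicator A x * real n)"
      using A(1) by (simp add: emeasure_eq_measure)
    have "(\<integral>x\<in>A. \<bar>h x\<bar> \<partial>M) \<le> (\<integral>x. indicator A x * real n + excess n x \<partial>M)"
      unfolding set_lebesgue_integral_def using A h excess_integrable indicator_integrable
      by (intro integral_mono integrable_mult_indicator Bochner_Integration.integrable_add integrable_abs)
         (auto simp: excess_def split: split_indicator)
    also have "\<dots> = measure M A * real n + (\<integral>x. excess n x \<partial>M)"
      using A excess_integrable indicator_integrable by (subst Bochner_Integration.integral_add) auto
    also have "measure M A * real n \<le> d * real n"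
      using A by (intro mult_right_mono) auto
    also have "d * real n < e/2"
      unfolding d_def using \<open>e > 0\<close> by (simp add: field_simps)
    finally show ?thesis
      using n by simp
  qed
  moreover have "d > 0"
    using \<open>e > 0\<close> by (simp add: d_def)
  ultimately show ?thesis
    by blast
qed

lemma (in finite_measure) uniformly_integrableI:
  fixes S :: "('a \<Rightarrow> real) set"
  assumes integrable: "\<And>h. h \<in> S \<Longrightarrow> integrable M h"
    and L1_bounded: "\<And>h. h \<in> S \<Longrightarrow> (\<integral>x. \<bar>h x\<bar> \<partial>M) \<le> C"
    and abs_cont: "\<And>e. e > 0 \<Longrightarrow> \<exists>d>0. \<forall>h\<in>S. \<forall>A\<in>sets M. measure M A < d \<longrightarrow> \<bar>\<integral>x\<in>A. h x \<partial>M\<bar> \<le> e"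
  shows "uniformly_integrable M S"
  unfolding uniformly_integrable_def
proof (intro allI impI)
  fix e :: real assume "e > 0"
  then obtain d where "d > 0"
    and d: "\<And>h A. h \<in> S \<Longrightarrow> A \<in> sets M \<Longrightarrow> measure M A < d \<Longrightarrow> \<bar>\<integral>x\<in>A. h x \<partial>M\<bar> \<le> e/2"
    using abs_cont[of "e/2"] by auto
  define c where "c = 2 * \<bar>C\<bar> / d + 1"
  have "c > 0"
    using \<open>d > 0\<close> by (simp add: c_def add_nonneg_pos)
  have "\<bar>C\<bar> < d * c"
    using \<open>d > 0\<close> by (simp add: c_def distrib_left)
  with \<open>c > 0\<close> have "\<bar>C\<bar> / c < d"
    by (simp add: pos_divide_less_eq mult.commute)
  have "(\<integral>\<^sup>+x\<in>{x \<in> space M. c < \<bar>h x\<bar>}. ennreal \<bar>h x\<bar> \<partial>M) \<le> ennreal e" if "h \<in> S" for h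
  proof -
    have h: "integrable M h" and [measurable]: "h \<in> borel_measurable M"
      using integrable[OF that] by auto
    define A where "A = {x \<in> space M. c < \<bar>h x\<bar>}"
    have A: "A \<in> sets M"
      unfolding A_def by measurable
    have "measure M A \<le> measure M {x \<in> space M. c \<le> \<bar>h x\<bar>}"
      unfolding A_def by (intro finite_measure_mono) auto
    also have "\<dots> \<le> (\<integral>x. \<bar>h x\<bar> \<partial>M) / c"
      using h \<open>c > 0\<close> by (intro integral_Markov_inequality_measure[where A="space M"]) auto
    also have "\<dots> \<le> \<bar>C\<bar> / c"
      using L1_bounded[OF that] \<open>c > 0\<close> by (auto intro: divide_right_mono)
    finally have "measure M A < d"
      using \<open>\<bar>C\<bar> / c < d\<close> by linarith
    have "\<bar>\<integral>x\<in>B. h x \<partial>M\<bar> \<le> e/2" if "B \<in> sets M" "B \<subseteq> A" for B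
      using that finite_measure_mono[OF that(2) A] \<open>measure M A < d\<close> \<open>h \<in> S\<close> by (intro d) auto
    then have "(\<integral>x\<in>A. \<bar>h x\<bar> \<partial>M) \<le> e"
      using set_integral_abs_le_double[OF h A, of "e/2"] by simp
    moreover have "(\<integral>\<^sup>+x\<in>A. ennreal \<bar>h x\<bar> \<partial>M) = ennreal (\<integral>x\<in>A. \<bar>h x\<bar> \<partial>M)"
      using h A by (intro nn_set_integral_eq_set_integral) auto
    ultimately show ?thesis
      unfolding A_def by (simp add: ennreal_leI)
  qed
  then show "\<exists>c. \<forall>h\<in>S. (\<integral>\<^sup>+x\<in>{x \<in> space M. c < \<bar>h x\<bar>}. ennreal \<bar>h x\<bar> \<partial>M) \<le> ennreal e"
    by blast
qed

lemma set_integral_UN_Un: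
  fixes h :: "'a \<Rightarrow> real" and D :: "nat \<Rightarrow> 'a set"
  assumes h: "integrable M h" and D: "\<And>m. D m \<in> sets M" "disjoint_family D" and "A \<inter> B = {}"
  shows "(\<integral>x\<in>(\<Union>m\<in>A \<union> B. D m). h x \<partial>M) = (\<integral>x\<in>(\<Union>m\<in>A. D m). h x \<partial>M) + (\<integral>x\<in>(\<Union>m\<in>B. D m). h x \<partial>M)"
proof -
  have "(\<Union>m\<in>A. D m) \<inter> (\<Union>m\<in>B. D m) = {}"
  proof (rule equals0I)
    fix x assume "x \<in> (\<Union>m\<in>A. D m) \<inter> (\<Union>m\<in>B. D m)"
    then obtain a b where "a \<in> A" "b \<in> B" "x \<in> D a" "x \<in> D b"
      by blast
    moreover have "a \<noteq> b"
      using \<open>A \<inter> B = {}\<close> \<open>a \<in> A\<close> \<open>b \<in> B\<close> by blast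
    ultimately show False
      using disjoint_family_onD[OF D(2), of a b] by blast
  qed
  then show ?thesis
    unfolding UN_Un using h sets_UN_nat[where D=D, OF D(1)]
    by (intro set_integral_Un integrable_imp_set_integrable)
qed

lemma set_integral_UN_disjoint_suminf:
  fixes h :: "'a \<Rightarrow> real" and D :: "nat \<Rightarrow> 'a set"
  assumes h: "integrable M h" and D: "\<And>m. D m \<in> sets M" "disjoint_family D"
  shows "(\<integral>x\<in>(\<Union>m\<in>J. D m). h x \<partial>M) = (\<Sum>m. if m \<in> J then \<integral>x\<in>D m. h x \<partial>M else 0)"
proof -
  define DJ where "DJ m = (if m \<in> J then D m else {})" for m
  have "(\<Union>m\<in>J. D m) = (\<Union>m. DJ m)"
    by (auto simp: DJ_def split: if_splits)
  moreover have "(\<integral>x\<in>(\<Union>m. DJ m). h x \<partial>M) = (\<Sum>m. \<integral>x\<in>DJ m. h x \<partial>M)"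
    using D h unfolding DJ_def
    by (intro lebesgue_integral_countable_add integrable_imp_set_integrable sets.countable_UN')
       (auto simp: disjoint_family_on_def)
  moreover have "(\<integral>x\<in>DJ m. h x \<partial>M) = (if m \<in> J then \<integral>x\<in>D m. h x \<partial>M else 0)" for m
    by (simp add: DJ_def set_lebesgue_integral_def)
  ultimately show ?thesis
    by simp
qed

lemma set_integral_abs_disjoint_tails_tendsto_0:
  fixes h :: "'a \<Rightarrow> real" and D :: "nat \<Rightarrow> 'a set"
  assumes h: "integrable M h" and D: "\<And>m. D m \<in> sets M" "disjoint_family D"
  shows "(\<lambda>N. \<integral>x\<in>(\<Union>m\<in>{N..}. D m). \<bar>h x\<bar> \<partial>M) \<longlonglongrightarrow> 0"
proof -
  have tail_sets: "(\<Union>m\<in>{N..}. D m) \<in> sets M" for N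
    using sets_UN_nat[where D=D, OF D(1)] .
  have "decseq (\<lambda>N. \<Union>m\<in>{N..}. D m)"
    unfolding decseq_def by (intro allI impI UN_mono) auto
  then have "(\<lambda>N. \<integral>x\<in>(\<Union>m\<in>{N..}. D m). \<bar>h x\<bar> \<partial>M) \<longlonglongrightarrow> (\<integral>x\<in>(\<Inter>N. \<Union>m\<in>{N..}. D m). \<bar>h x\<bar> \<partial>M)"
    by (rule set_integral_cont_down[OF tail_sets _ integrable_imp_set_integrable[OF integrable_abs[OF h] tail_sets]])
  moreover have "(\<Inter>N. \<Union>m\<in>{N..}. D m) = {}"
  proof (rule equals0I)
    fix x assume x: "x \<in> (\<Inter>N. \<Union>m\<in>{N..}. D m)"
    then obtain n where n: "x \<in> D n"
      by blast
    from x obtain m where m: "Suc n \<le> m" "x \<in> D m"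
      by blast
    then have "D n \<inter> D m = {}"
      using D(2) by (intro disjoint_family_onD) auto
    with n m show False
      by blast
  qed
  ultimately show ?thesis
    by (simp add: set_lebesgue_integral_def)
qed

lemma set_integral_disjoint_tails_small:
  fixes h :: "'a \<Rightarrow> real" and D :: "nat \<Rightarrow> 'a set"
  assumes h: "integrable M h" and D: "\<And>m. D m \<in> sets M" "disjoint_family D" and "\<epsilon> > 0"
  shows "\<exists>N. \<forall>J\<subseteq>{N..}. \<bar>\<integral>x\<in>(\<Union>m\<in>J. D m). h x \<partial>M\<bar> < \<epsilon>"
proof -
  have "\<forall>\<^sub>F N in sequentially. (\<integral>x\<in>(\<Union>m\<in>{N..}. D m). \<bar>h x\<bar> \<partial>M) < \<epsilon>"
    using order_tendstoD(2)[OF set_integral_abs_disjoint_tails_tendsto_0[where D=D, OF h D] \<open>\<epsilon> > 0\<close>] .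
  then obtain N where N: "(\<integral>x\<in>(\<Union>m\<in>{N..}. D m). \<bar>h x\<bar> \<partial>M) < \<epsilon>"
    using eventually_happens'[OF sequentially_bot] by blast
  have "\<bar>\<integral>x\<in>(\<Union>m\<in>J. D m). h x \<partial>M\<bar> < \<epsilon>" if "J \<subseteq> {N..}" for J
  proof -
    have "(\<Union>m\<in>J. D m) \<subseteq> (\<Union>m\<in>{N..}. D m)"
      using that by blast
    then have "\<bar>\<integral>x\<in>(\<Union>m\<in>J. D m). h x \<partial>M\<bar> \<le> (\<integral>x\<in>(\<Union>m\<in>{N..}. D m). \<bar>h x\<bar> \<partial>M)"
      by (intro abs_set_integral_le_superset[OF h sets_UN_nat[where D=D, OF D(1)] sets_UN_nat[where D=D, OF D(1)]])
    with N show ?thesis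
      by linarith
  qed
  then show ?thesis
    by blast
qed

lemma set_integral_disjoint_tendsto_0:
  fixes h :: "'a \<Rightarrow> real" and D :: "nat \<Rightarrow> 'a set"
  assumes h: "integrable M h" and D: "\<And>m. D m \<in> sets M" "disjoint_family D"
  shows "(\<lambda>n. \<integral>x\<in>D n. h x \<partial>M) \<longlonglongrightarrow> 0"
proof -
  have bound: "norm (\<integral>x\<in>D n. h x \<partial>M) \<le> (\<integral>x\<in>(\<Union>m\<in>{n..}. D m). \<bar>h x\<bar> \<partial>M)" for n
    using abs_set_integral_le_superset[OF h D(1)[of n] sets_UN_nat[where D=D and J="{n..}", OF D(1)]] by auto
  show ?thesis
    by (rule Lim_null_comparison[OF always_eventually set_integral_abs_disjoint_tails_tendsto_0[where D=D, OF h D]])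
      (use bound in blast)
qed

lemma (in finite_measure) measure_UN_tail_tendsto_0:
  assumes A: "\<And>k. A k \<in> sets M" and summable: "summable (\<lambda>k. measure M (A k))"
  shows "(\<lambda>N. measure M (\<Union>k\<in>{N..}. A k)) \<longlonglongrightarrow> 0"
proof (rule tendsto_sandwich[OF _ _ tendsto_const suminf_exist_split2[OF summable]])
  have "measure M (\<Union>k\<in>{N..}. A k) \<le> (\<Sum>k. measure M (A (k + N)))" for N
  proof -
    have "(\<Union>k\<in>{N..}. A k) = (\<Union>k. A (k + N))"
    proof (intro equalityI subsetI)
      fix x assume "x \<in> (\<Union>k\<in>{N..}. A k)"
      then obtain k where "N \<le> k" "x \<in> A k"
        by auto
      then have "x \<in> A (k - N + N)"
        by simp
      then show "x \<in> (\<Union>k. A (k + N))"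
        by blast
    qed auto
    then show ?thesis
      using finite_measure_subadditive_countably[of "\<lambda>k. A (k + N)"] A
        summable_ignore_initial_segment[OF summable, of N] by auto
  qed
  then show "\<forall>\<^sub>F N in sequentially. measure M (\<Union>k\<in>{N..}. A k) \<le> (\<Sum>k. measure M (A (k + N)))"
    by simp
qed simp

lemma strict_mono_subseq_below:
  fixes t d :: "nat \<Rightarrow> real"
  assumes t: "t \<longlonglongrightarrow> 0" and d: "\<And>n. d n > 0"
  shows "\<exists>r. strict_mono r \<and> (\<forall>j. t (r (Suc j)) < d (r j))"
proof -
  have "\<exists>m. n < m \<and> t m < d n" for n
  proof -
    have "\<forall>\<^sub>F m in sequentially. n < m \<and> t m < d n"
      using order_tendstoD(2)[OF t d[of n]] by (intro eventually_conj eventually_gt_at_top)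
    then show ?thesis
      using eventually_happens'[OF sequentially_bot] by blast
  qed
  then obtain succ where succ_gt: "\<And>n. n < succ n" and succ_below: "\<And>n. t (succ n) < d n"
    by metis
  define r where "r j = (succ ^^ j) 0" for j
  have r_Suc: "r (Suc j) = succ (r j)" for j
    by (simp add: r_def)
  have "strict_mono r"
    unfolding strict_mono_Suc_iff r_Suc using succ_gt by blast
  moreover have "t (r (Suc j)) < d (r j)" for j
    unfolding r_Suc by (rule succ_below)
  ultimately show ?thesis
    by blast
qed

lemma diagonal_convergent_subseq:
  fixes a :: "nat \<Rightarrow> nat \<Rightarrow> real"
  assumes bounded: "\<And>n. Bseq (a n)"
  shows "\<exists>r. strict_mono r \<and> (\<forall>n. convergent (\<lambda>i. a n (r i)))"
proof -
  interpret subseqs "\<lambda>n s. convergent (\<lambda>i. a n (s i))"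
  proof
    fix n and s :: "nat \<Rightarrow> nat"
    obtain f where f: "strict_mono f" "monoseq (\<lambda>i. a n (s (f i)))"
      using seq_monosub[of "\<lambda>i. a n (s i)"] by blast
    have "Bseq (\<lambda>i. a n (s (f i)))"
      using bounded by (rule Bseq_subseq)
    then have "convergent (\<lambda>i. a n (s (f i)))"
      using f(2) Bseq_monoseq_convergent by blast
    then show "\<exists>r'. strict_mono r' \<and> convergent (\<lambda>i. a n ((s \<circ> r') i))"
      using f(1) by auto
  qed
  have "convergent (\<lambda>i. a n (diagseq i))" for n
  proof -
    have "convergent (\<lambda>i. a n ((diagseq \<circ> (+) (Suc n)) i))"
    proof (rule diagseq_holds)
      fix r s :: "nat \<Rightarrow> nat" and n assume "strict_mono r" "convergent (\<lambda>i. a n (s i))"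
      then show "convergent (\<lambda>i. a n ((s \<circ> r) i))"
        using convergent_subseq_convergent[of "\<lambda>i. a n (s i)" r] by (simp add: comp_def)
    qed
    then have "convergent (\<lambda>i. a n (diagseq (i + Suc n)))"
      by (simp add: comp_def add.commute)
    then show ?thesis
      using convergent_ignore_initial_segment[of "\<lambda>i. a n (diagseq i)" "Suc n"] by simp
  qed
  then show ?thesis
    using subseq_diagseq by blast
qed

definition seq_cluster_point :: "'b topology \<Rightarrow> (nat \<Rightarrow> 'b) \<Rightarrow> 'b \<Rightarrow> bool" where
  "seq_cluster_point X z x \<longleftrightarrow> (\<forall>U. openin X U \<and> x \<in> U \<longrightarrow> (\<exists>\<^sub>F j in sequentially. z j \<in> U))"

lemma compactin_imp_seq_cluster_point:
  assumes "compactin X S" "\<And>j. z j \<in> S"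
  shows "\<exists>x\<in>S. seq_cluster_point X z x"
proof (rule ccontr)
  assume no_cluster_point: "\<not> ?thesis"
  have "\<exists>U. openin X U \<and> x \<in> U \<and> (\<exists>N. \<forall>j\<ge>N. z j \<notin> U)" if x: "x \<in> S" for x
  proof -
    obtain U where "openin X U" "x \<in> U" "\<not> (\<exists>\<^sub>F j in sequentially. z j \<in> U)"
      using no_cluster_point x unfolding seq_cluster_point_def by blast
    then show ?thesis
      unfolding not_frequently eventually_sequentially by blast
  qed
  then have "\<forall>x\<in>S. \<exists>U. openin X U \<and> x \<in> U \<and> (\<exists>N. \<forall>j\<ge>N. z j \<notin> U)"
    by blast
  then obtain U where U: "\<forall>x\<in>S. openin X (U x) \<and> x \<in> U x \<and> (\<exists>N. \<forall>j\<ge>N. z j \<notin> U x)"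
    by (rule bchoice [elim_format]) blast
  then have "\<forall>x\<in>S. \<exists>N. \<forall>j\<ge>N. z j \<notin> U x"
    by blast
  then obtain N where N: "\<forall>x\<in>S. \<forall>j\<ge>N x. z j \<notin> U x"
    by (rule bchoice [elim_format]) blast
  have "S \<subseteq> \<Union>(U ` S)" and "\<forall>V\<in>U ` S. openin X V"
    using U by blast+
  then obtain \<F> where \<F>: "finite \<F>" "\<F> \<subseteq> U ` S" "S \<subseteq> \<Union>\<F>"
    using assms(1) unfolding compactin_def by meson
  then obtain T where T: "T \<subseteq> S" "finite T" "\<F> = U ` T"
    by (meson finite_subset_image)
  define N0 where "N0 = Max (insert 0 (N ` T))"
  obtain t where t: "t \<in> T" "z N0 \<in> U t"
    using \<F> T assms(2) by blast
  have "N t \<le> N0"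
    unfolding N0_def using T t by (intro Max_ge) auto
  then show False
    using N t T by blast
qed

lemma seq_cluster_point_continuous_map:
  assumes "seq_cluster_point X z x" "continuous_map X euclideanreal \<phi>" "x \<in> topspace X" "e > 0"
  shows "\<exists>\<^sub>F j in sequentially. \<bar>\<phi> (z j) - \<phi> x\<bar> < e"
proof -
  let ?U = "{y \<in> topspace X. \<phi> y \<in> ball (\<phi> x) e}"
  have "openin X ?U"
    using assms(2) by (intro openin_continuous_map_preimage) auto
  then have "\<exists>\<^sub>F j in sequentially. z j \<in> ?U"
    using assms unfolding seq_cluster_point_def by auto
  then show ?thesis
    by (rule frequently_elim1) (auto simp: dist_real_def abs_minus_commute)
qed

lemma cluster_value_eq_limit:
  fixes a :: "nat \<Rightarrow> real"
  assumes "a \<longlonglongrightarrow> L" and cluster: "\<And>e. e > 0 \<Longrightarrow> \<exists>\<^sub>F j in sequentially. \<bar>a j - c\<bar> < e"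
  shows "c = L"
proof (rule ccontr)
  assume "c \<noteq> L"
  then have e: "\<bar>c - L\<bar> / 2 > 0"
    by simp
  have "\<forall>\<^sub>F j in sequentially. \<bar>a j - L\<bar> < \<bar>c - L\<bar> / 2"
    using assms(1) e unfolding tendsto_iff dist_real_def by blast
  with cluster[OF e] have "\<exists>\<^sub>F j in sequentially. \<bar>a j - c\<bar> < \<bar>c - L\<bar> / 2 \<and> \<bar>a j - L\<bar> < \<bar>c - L\<bar> / 2"
    by (rule frequently_eventually_frequently)
  then obtain j where "\<bar>a j - c\<bar> < \<bar>c - L\<bar> / 2" "\<bar>a j - L\<bar> < \<bar>c - L\<bar> / 2"
    by (auto dest: frequently_ex)
  then have "\<bar>a j - c\<bar> + \<bar>a j - L\<bar> < \<bar>c - L\<bar> / 2 + \<bar>c - L\<bar> / 2"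
    by (rule add_strict_mono)
  moreover have "\<bar>c - L\<bar> \<le> \<bar>a j - c\<bar> + \<bar>a j - L\<bar>"
    by linarith
  ultimately show False
    by simp
qed

lemma tendsto_of_subseq_cluster_value:
  fixes a :: "nat \<Rightarrow> real"
  assumes "\<And>s e. strict_mono s \<Longrightarrow> e > 0 \<Longrightarrow> \<exists>\<^sub>F j in sequentially. \<bar>a (s j) - c\<bar> < e"
  shows "a \<longlonglongrightarrow> c"
proof (rule ccontr)
  assume "\<not> ?thesis"
  then obtain e where "e > 0" and "\<forall>N. \<exists>n\<ge>N. e \<le> \<bar>a n - c\<bar>"
    unfolding LIMSEQ_def dist_real_def by (auto simp: not_less)
  then have "infinite {n. e \<le> \<bar>a n - c\<bar>}"
    unfolding infinite_nat_iff_unbounded_le by auto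
  then obtain s :: "nat \<Rightarrow> nat" where "strict_mono s" and far: "\<forall>j. s j \<in> {n. e \<le> \<bar>a n - c\<bar>}"
    using infinite_enumerate by blast
  obtain j where "\<bar>a (s j) - c\<bar> < e"
    using frequently_ex[OF assms[OF \<open>strict_mono s\<close> \<open>e > 0\<close>]] by blast
  moreover have "e \<le> \<bar>a (s j) - c\<bar>"
    using far by simp
  ultimately show False
    by linarith
qed

section \<open>The gliding hump\<close>

lemma gliding_hump_construction:
  fixes \<mu> :: "nat \<Rightarrow> nat set \<Rightarrow> real" and p N succ :: "nat \<Rightarrow> nat"
  assumes additive: "\<And>i A B. A \<inter> B = {} \<Longrightarrow> \<mu> i (A \<union> B) = \<mu> i A + \<mu> i B"
    and N_gt: "\<And>i. p i < N i" and N_tail: "\<And>i J. J \<subseteq> {N i..} \<Longrightarrow> \<bar>\<mu> i J\<bar> < e/8"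
    and succ_far: "\<And>i. N i \<le> p (succ i)"
    and succ_head: "\<And>i J. J \<subseteq> {..<N i} \<Longrightarrow> \<bar>\<mu> (succ i) J\<bar> < e/8"
    and succ_hump: "\<And>i. e \<le> \<bar>\<mu> (succ i) {p (succ i)}\<bar>"
  shows "3 * e / 4 < \<bar>\<mu> ((succ ^^ Suc k) 0) (range (\<lambda>j. p ((succ ^^ Suc j) 0)))\<bar>"
proof -
  define s where "s k = (succ ^^ k) 0" for k
  define T where "T = range (\<lambda>k. p (s (Suc k)))"
  have s_Suc: "s (Suc k) = succ (s k)" for k
    by (simp add: s_def)
  have N_s_Suc: "N (s k) \<le> N (s (Suc k))" for k
    using succ_far[of "s k"] N_gt[of "s (Suc k)"] by (simp add: s_Suc)
  have N_s_mono: "N (s k) \<le> N (s k')" if "k \<le> k'" for k k'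
    using lift_Suc_mono_le[of "\<lambda>k. N (s k)", OF N_s_Suc that] .
  have hump_window: "T \<inter> {N (s k)..<N (s (Suc k))} = {p (s (Suc k))}"
  proof (intro equalityI subsetI)
    fix x assume "x \<in> T \<inter> {N (s k)..<N (s (Suc k))}"
    then obtain j where x: "x = p (s (Suc j))" "N (s k) \<le> x" "x < N (s (Suc k))"
      unfolding T_def by auto
    have "\<not> j < k"
      using N_gt[of "s (Suc j)"] N_s_mono[of "Suc j" k] x by auto
    moreover have "\<not> k < j"
      using succ_far[of "s j"] N_s_mono[of "Suc k" j] x by (auto simp: s_Suc)
    ultimately show "x \<in> {p (s (Suc k))}"
      using x by simp
  qed (use succ_far N_gt in \<open>auto simp: T_def s_Suc\<close>)
  \<comment> \<open>at the index s (Suc k), \<mu> is small on T below N (s k) by the choice of succ and above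
    N (s (Suc k)) by the choice of N, while in between T only contains the hump p (s (Suc k))\<close>
  let ?i = "s (Suc k)" and ?a = "N (s k)" and ?b = "N (s (Suc k))"
  have "T = (T \<inter> {..<?a}) \<union> (T \<inter> {?a..<?b}) \<union> (T \<inter> {?b..})"
    using N_s_Suc[of k] by auto
  moreover have "(T \<inter> {..<?a}) \<inter> (T \<inter> {?a..<?b}) = {}"
    and "((T \<inter> {..<?a}) \<union> (T \<inter> {?a..<?b})) \<inter> (T \<inter> {?b..}) = {}"
    using N_s_Suc[of k] by auto
  ultimately have "\<mu> ?i T = \<mu> ?i (T \<inter> {..<?a}) + \<mu> ?i {p ?i} + \<mu> ?i (T \<inter> {?b..})"
    using additive hump_window by metis
  moreover have "\<bar>\<mu> ?i (T \<inter> {..<?a})\<bar> < e/8"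
    unfolding s_Suc by (rule succ_head) auto
  moreover have "\<bar>\<mu> ?i (T \<inter> {?b..})\<bar> < e/8"
    by (rule N_tail) auto
  moreover have "e \<le> \<bar>\<mu> ?i {p ?i}\<bar>"
    unfolding s_Suc by (rule succ_hump)
  ultimately show ?thesis
    unfolding s_def T_def by linarith
qed

lemma frequent_hump_beyond:
  fixes \<mu> :: "nat \<Rightarrow> nat set \<Rightarrow> real" and p :: "nat \<Rightarrow> nat"
  assumes pointwise: "\<And>J. (\<lambda>i. \<mu> i J) \<longlonglongrightarrow> 0" and p: "filterlim p at_top sequentially"
    and humps: "\<exists>\<^sub>F i in sequentially. e \<le> \<bar>\<mu> i {p i}\<bar>" and "\<delta> > 0"
  shows "\<exists>i'. i < i' \<and> n \<le> p i' \<and> (\<forall>J\<subseteq>{..<n}. \<bar>\<mu> i' J\<bar> < \<delta>) \<and> e \<le> \<bar>\<mu> i' {p i'}\<bar>"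
proof -
  have "\<forall>\<^sub>F i' in sequentially. \<forall>J\<in>Pow {..<n}. \<bar>\<mu> i' J\<bar> < \<delta>"
    using \<open>\<delta> > 0\<close>
    by (intro eventually_ball_finite ballI order_tendstoD(2)[OF tendsto_rabs_zero[OF pointwise]]) auto
  moreover have "\<forall>\<^sub>F i' in sequentially. n \<le> p i'"
    using p by (simp add: filterlim_at_top)
  moreover have "\<forall>\<^sub>F i' in sequentially. i < i'"
    by (rule eventually_gt_at_top)
  ultimately have "\<exists>\<^sub>F i' in sequentially. e \<le> \<bar>\<mu> i' {p i'}\<bar> \<and>
      i < i' \<and> n \<le> p i' \<and> (\<forall>J\<in>Pow {..<n}. \<bar>\<mu> i' J\<bar> < \<delta>)"
    using humps by (intro frequently_eventually_frequently eventually_conj)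
  then obtain i' where "e \<le> \<bar>\<mu> i' {p i'}\<bar>" "i < i'" "n \<le> p i'" "\<forall>J\<in>Pow {..<n}. \<bar>\<mu> i' J\<bar> < \<delta>"
    by (blast dest: frequently_ex)
  then show ?thesis
    by auto
qed

lemma gliding_hump:
  fixes \<mu> :: "nat \<Rightarrow> nat set \<Rightarrow> real" and p :: "nat \<Rightarrow> nat"
  assumes additive: "\<And>i A B. A \<inter> B = {} \<Longrightarrow> \<mu> i (A \<union> B) = \<mu> i A + \<mu> i B"
    and pointwise: "\<And>J. (\<lambda>i. \<mu> i J) \<longlonglongrightarrow> 0"
    and tails: "\<And>i \<epsilon>. \<epsilon> > 0 \<Longrightarrow> \<exists>N. \<forall>J\<subseteq>{N..}. \<bar>\<mu> i J\<bar> < \<epsilon>"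
    and p: "filterlim p at_top sequentially"
  shows "(\<lambda>i. \<mu> i {p i}) \<longlonglongrightarrow> 0"
proof (rule ccontr)
  assume "\<not> ?thesis"
  then obtain e where "e > 0" and humps: "\<exists>\<^sub>F i in sequentially. e \<le> \<bar>\<mu> i {p i}\<bar>"
    unfolding tendsto_iff dist_real_def by (auto simp: not_eventually not_less)
  have "\<exists>N. p i < N \<and> (\<forall>J\<subseteq>{N..}. \<bar>\<mu> i J\<bar> < e/8)" for i
  proof -
    obtain N where "\<forall>J\<subseteq>{N..}. \<bar>\<mu> i J\<bar> < e/8"
      using tails[of "e/8" i] \<open>e > 0\<close> by auto
    then have "\<forall>J\<subseteq>{max N (Suc (p i))..}. \<bar>\<mu> i J\<bar> < e/8"
      by (meson atLeast_subset_iff max.cobounded1 order_trans)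
    then show ?thesis
      by (intro exI[of _ "max N (Suc (p i))"]) simp
  qed
  then obtain N where N_gt: "\<And>i. p i < N i"
    and N_tail: "\<And>i J. J \<subseteq> {N i..} \<Longrightarrow> \<bar>\<mu> i J\<bar> < e/8"
    by metis
  have "\<exists>i'. i < i' \<and> N i \<le> p i' \<and> (\<forall>J\<subseteq>{..<N i}. \<bar>\<mu> i' J\<bar> < e/8) \<and> e \<le> \<bar>\<mu> i' {p i'}\<bar>" for i
    using \<open>e > 0\<close> by (intro frequent_hump_beyond[OF pointwise p humps]) simp
  then obtain succ where succ_gt: "\<And>i. i < succ i" and succ_far: "\<And>i. N i \<le> p (succ i)"
    and succ_head: "\<And>i J. J \<subseteq> {..<N i} \<Longrightarrow> \<bar>\<mu> (succ i) J\<bar> < e/8"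
    and succ_hump: "\<And>i. e \<le> \<bar>\<mu> (succ i) {p (succ i)}\<bar>"
    by metis
  define T where "T = range (\<lambda>k. p ((succ ^^ Suc k) 0))"
  have "\<forall>\<^sub>F i in sequentially. \<bar>\<mu> i T\<bar> < 3 * e / 4"
    using \<open>e > 0\<close> by (intro order_tendstoD(2)[OF tendsto_rabs_zero[OF pointwise]]) auto
  then obtain i0 where i0: "\<And>i. i0 \<le> i \<Longrightarrow> \<bar>\<mu> i T\<bar> < 3 * e / 4"
    unfolding eventually_sequentially by blast
  have "strict_mono (\<lambda>k. (succ ^^ k) 0)"
    unfolding strict_mono_Suc_iff using succ_gt by simp
  then have "i0 \<le> (succ ^^ Suc i0) 0"
    using seq_suble[of "\<lambda>k. (succ ^^ k) 0" "Suc i0"] by simp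
  then have "\<bar>\<mu> ((succ ^^ Suc i0) 0) T\<bar> < 3 * e / 4"
    by (rule i0)
  with gliding_hump_construction[where \<mu>=\<mu> and p=p and N=N and succ=succ and e=e and k=i0,
      OF additive N_gt N_tail succ_far succ_head succ_hump]
  show False
    unfolding T_def by linarith
qed

lemma disjoint_family_Diff_later:
  fixes S R :: "nat \<Rightarrow> 'a set"
  assumes "\<And>j k. j < k \<Longrightarrow> S k \<subseteq> R j"
  shows "disjoint_family (\<lambda>j. S j - R j)"
  unfolding disjoint_family_on_def
proof (intro ballI impI)
  fix j k :: nat assume "j \<noteq> k"
  then consider "j < k" | "k < j"
    by linarith
  then show "(S j - R j) \<inter> (S k - R k) = {}"
  proof cases
    case 1
    then show ?thesis
      using assms[of j k] by blast
  next
    case 2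
    then show ?thesis
      using assms[of k j] by blast
  qed
qed

lemma (in finite_measure) humps_with_vanishing_tails:
  fixes H :: "'b \<Rightarrow> 'a \<Rightarrow> real"
  assumes large: "\<And>d. d > 0 \<Longrightarrow> \<exists>f\<in>K. \<exists>A\<in>sets M. measure M A < d \<and> e < \<bar>\<integral>x\<in>A. H f x \<partial>M\<bar>"
  shows "\<exists>f A. (\<forall>n. f n \<in> K \<and> A n \<in> sets M \<and> e < \<bar>\<integral>x\<in>A n. H (f n) x \<partial>M\<bar>)
    \<and> (\<lambda>N. measure M (\<Union>k\<in>{N..}. A k)) \<longlonglongrightarrow> 0"
proof -
  have "\<exists>f\<in>K. \<exists>A\<in>sets M. measure M A < (1/2)^n \<and> e < \<bar>\<integral>x\<in>A. H f x \<partial>M\<bar>" for n :: nat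
    using large[of "(1/2)^n"] by simp
  then obtain f A where f: "\<And>n. f n \<in> K" and A: "\<And>n. A n \<in> sets M"
    and A_small: "\<And>n. measure M (A n) < (1/2)^n" and A_large: "\<And>n. e < \<bar>\<integral>x\<in>A n. H (f n) x \<partial>M\<bar>"
    by metis
  have "summable (\<lambda>n. measure M (A n))"
  proof (rule summable_comparison_test'[where N=0])
    show "summable (\<lambda>n. (1/2::real)^n)"
      by simp
    show "norm (measure M (A n)) \<le> (1/2)^n" for n
      using A_small[of n] by simp
  qed
  then have "(\<lambda>N. measure M (\<Union>k\<in>{N..}. A k)) \<longlonglongrightarrow> 0"
    using A by (intro measure_UN_tail_tendsto_0)
  with f A A_large show ?thesis
    by blast
qed

lemma (in finite_measure) extract_disjoint_humps:
  fixes H :: "'b \<Rightarrow> 'a \<Rightarrow> real"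
  assumes integrable: "\<And>f. f \<in> K \<Longrightarrow> integrable M (H f)" and "e > 0"
    and large: "\<And>d. d > 0 \<Longrightarrow> \<exists>f\<in>K. \<exists>A\<in>sets M. measure M A < d \<and> e < \<bar>\<integral>x\<in>A. H f x \<partial>M\<bar>"
  obtains y :: "nat \<Rightarrow> 'b" and D :: "nat \<Rightarrow> 'a set"
  where "\<And>m. y m \<in> K" "\<And>m. D m \<in> sets M" "disjoint_family D" "\<And>m. e/2 < \<bar>\<integral>x\<in>D m. H (y m) x \<partial>M\<bar>"
proof -
  obtain f :: "nat \<Rightarrow> 'b" and A :: "nat \<Rightarrow> 'a set"
    where f: "\<And>n. f n \<in> K" and A: "\<And>n. A n \<in> sets M" and A_large: "\<And>n. e < \<bar>\<integral>x\<in>A n. H (f n) x \<partial>M\<bar>"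
      and tails: "(\<lambda>N. measure M (\<Union>k\<in>{N..}. A k)) \<longlonglongrightarrow> 0"
    using humps_with_vanishing_tails[OF large] by blast
  have "\<exists>d>0. \<forall>B\<in>sets M. measure M B < d \<longrightarrow> (\<integral>x\<in>B. \<bar>H (f n) x\<bar> \<partial>M) < e/2" for n
    using f integrable \<open>e > 0\<close> by (intro set_integral_abs_continuous) auto
  then obtain d where d_pos: "\<And>n. d n > 0"
    and d: "\<And>n B. B \<in> sets M \<Longrightarrow> measure M B < d n \<Longrightarrow> (\<integral>x\<in>B. \<bar>H (f n) x\<bar> \<partial>M) < e/2"
    by metis
  obtain r where r: "strict_mono r" and r_tails: "\<forall>j. measure M (\<Union>k\<in>{r (Suc j)..}. A k) < d (r j)"
    using strict_mono_subseq_below[where d=d, OF tails d_pos] by blast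
  \<comment> \<open>remove from each hump all later ones; what is removed is too small to matter for f (r j)\<close>
  define R where "R j = (\<Union>k\<in>{r (Suc j)..}. A k)" for j
  have R: "R j \<in> sets M" for j
    unfolding R_def using sets_UN_nat[where D=A, OF A] .
  have "A (r k) \<subseteq> R j" if "j < k" for j k
    using strict_mono_less_eq[OF r, of "Suc j" k] that unfolding R_def by auto
  then have "disjoint_family (\<lambda>j. A (r j) - R j)"
    by (rule disjoint_family_Diff_later)
  moreover have "e/2 < \<bar>\<integral>x\<in>A (r j) - R j. H (f (r j)) x \<partial>M\<bar>" for j
  proof -
    have "\<bar>\<integral>x\<in>A (r j). H (f (r j)) x \<partial>M\<bar>
        \<le> \<bar>\<integral>x\<in>A (r j) - R j. H (f (r j)) x \<partial>M\<bar> + (\<integral>x\<in>R j. \<bar>H (f (r j)) x\<bar> \<partial>M)"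
      using integrable f A R by (intro abs_set_integral_le_Diff) auto
    moreover have "(\<integral>x\<in>R j. \<bar>H (f (r j)) x\<bar> \<partial>M) < e/2"
      using R r_tails unfolding R_def by (intro d) auto
    ultimately show ?thesis
      using A_large[of "r j"] by linarith
  qed
  moreover have "A (r j) - R j \<in> sets M" for j
    using A R by auto
  ultimately show ?thesis
    using f by (intro that[of "\<lambda>j. f (r j)" "\<lambda>j. A (r j) - R j"])
qed

section \<open>Compact families of signed measures\<close>

locale setwise_compact =
  fixes M :: "'a measure" and X :: "'b topology" and K :: "'b set" and H :: "'b \<Rightarrow> 'a \<Rightarrow> real"
  assumes finite_measure: "finite_measure M"
    and compact: "compactin X K"
    and integrable: "\<And>f. f \<in> K \<Longrightarrow> integrable M (H f)"
    and continuous: "\<And>A. A \<in> sets M \<Longrightarrow> continuous_map X euclideanreal (\<lambda>f. \<integral>x\<in>A. H f x \<partial>M)"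
begin

lemma Bseq_set_integrals:
  assumes "A \<in> sets M" "\<And>i. y i \<in> K"
  shows "Bseq (\<lambda>i. \<integral>x\<in>A. H (y i) x \<partial>M)"
proof -
  have "compact ((\<lambda>f. \<integral>x\<in>A. H f x \<partial>M) ` K)"
    using image_compactin[OF compact continuous[OF assms(1)]] by simp
  then obtain B where "\<And>f. f \<in> K \<Longrightarrow> \<bar>\<integral>x\<in>A. H f x \<partial>M\<bar> \<le> B"
    by (fastforce dest: compact_imp_bounded simp: bounded_real)
  then show ?thesis
    using assms(2) by (intro BseqI'[of _ B]) auto
qed

lemma set_integral_at_cluster_point:
  fixes y :: "nat \<Rightarrow> 'b"
  assumes "A \<in> sets M" "(\<lambda>i. \<integral>x\<in>A. H (y i) x \<partial>M) \<longlonglongrightarrow> L"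
    and "f \<in> K" "seq_cluster_point X (\<lambda>j. y (s j)) f" "strict_mono s"
  shows "(\<integral>x\<in>A. H f x \<partial>M) = L"
proof (rule cluster_value_eq_limit)
  show "(\<lambda>j. \<integral>x\<in>A. H (y (s j)) x \<partial>M) \<longlonglongrightarrow> L"
    using LIMSEQ_subseq_LIMSEQ[OF assms(2,5)] by (simp add: comp_def)
  show "\<exists>\<^sub>F j in sequentially. \<bar>(\<integral>x\<in>A. H (y (s j)) x \<partial>M) - (\<integral>x\<in>A. H f x \<partial>M)\<bar> < e"
    if "e > 0" for e
    using compactin_subset_topspace[OF compact] \<open>f \<in> K\<close>
    by (intro seq_cluster_point_continuous_map[OF assms(4) continuous[OF assms(1)] _ that]) auto
qed

lemma setwise_convergent_subseq:
  fixes y :: "nat \<Rightarrow> 'b" and D :: "nat \<Rightarrow> 'a set"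
  assumes y: "\<And>i. y i \<in> K" and D: "\<And>m. D m \<in> sets M" "disjoint_family D"
  obtains r f0 where "strict_mono r" "f0 \<in> K"
    "\<And>J. (\<lambda>i. \<integral>x\<in>(\<Union>m\<in>J. D m). H (y (r i)) x \<partial>M) \<longlonglongrightarrow> (\<integral>x\<in>(\<Union>m\<in>J. D m). H f0 x \<partial>M)"
proof -
  have "Bseq (\<lambda>i. \<integral>x\<in>D n. H (y i) x \<partial>M)" for n
    using D(1) y by (rule Bseq_set_integrals)
  then obtain r where r: "strict_mono r"
    and conv: "\<And>n. (\<lambda>i. \<integral>x\<in>D n. H (y (r i)) x \<partial>M) \<longlonglongrightarrow> lim (\<lambda>i. \<integral>x\<in>D n. H (y (r i)) x \<partial>M)"
    using diagonal_convergent_subseq[of "\<lambda>n i. \<integral>x\<in>D n. H (y i) x \<partial>M"]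
    by (auto simp: convergent_LIMSEQ_iff)
  obtain f0 where f0: "f0 \<in> K" "seq_cluster_point X (\<lambda>i. y (r i)) f0"
    using compactin_imp_seq_cluster_point[OF compact, of "\<lambda>i. y (r i)"] y by blast
  \<comment> \<open>all cluster points of subsequences agree on each D n, hence on every union of the D n\<close>
  have agree: "(\<integral>x\<in>(\<Union>m\<in>J. D m). H f x \<partial>M) = (\<integral>x\<in>(\<Union>m\<in>J. D m). H f0 x \<partial>M)"
    if "f \<in> K" "seq_cluster_point X (\<lambda>j. y (r (s j))) f" "strict_mono s" for f s J
  proof -
    have parts: "(\<integral>x\<in>D n. H f x \<partial>M) = (\<integral>x\<in>D n. H f0 x \<partial>M)" for n
      using set_integral_at_cluster_point[where y="\<lambda>i. y (r i)", OF D(1) conv that]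
        set_integral_at_cluster_point[where y="\<lambda>i. y (r i)", OF D(1) conv f0 strict_mono_id[unfolded id_def]]
      by simp
    show ?thesis
      unfolding set_integral_UN_disjoint_suminf[where D=D, OF integrable[OF that(1)] D]
        set_integral_UN_disjoint_suminf[where D=D, OF integrable[OF f0(1)] D] parts ..
  qed
  have "(\<lambda>i. \<integral>x\<in>(\<Union>m\<in>J. D m). H (y (r i)) x \<partial>M) \<longlonglongrightarrow> (\<integral>x\<in>(\<Union>m\<in>J. D m). H f0 x \<partial>M)" for J
  proof (rule tendsto_of_subseq_cluster_value)
    fix s :: "nat \<Rightarrow> nat" and e :: real assume "strict_mono s" "e > 0"
    obtain f where f: "f \<in> K" "seq_cluster_point X (\<lambda>j. y (r (s j))) f"
      using compactin_imp_seq_cluster_point[OF compact, of "\<lambda>j. y (r (s j))"] y by blast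
    have U: "(\<Union>m\<in>J. D m) \<in> sets M"
      using sets_UN_nat[where D=D, OF D(1)] .
    have "\<exists>\<^sub>F j in sequentially.
        \<bar>(\<integral>x\<in>(\<Union>m\<in>J. D m). H (y (r (s j))) x \<partial>M) - (\<integral>x\<in>(\<Union>m\<in>J. D m). H f x \<partial>M)\<bar> < e"
      using compactin_subset_topspace[OF compact] f(1)
      by (intro seq_cluster_point_continuous_map[OF f(2) continuous[OF U] _ \<open>e > 0\<close>]) auto
    then show "\<exists>\<^sub>F j in sequentially.
        \<bar>(\<integral>x\<in>(\<Union>m\<in>J. D m). H (y (r (s j))) x \<partial>M) - (\<integral>x\<in>(\<Union>m\<in>J. D m). H f0 x \<partial>M)\<bar> < e"
      unfolding agree[OF f \<open>strict_mono s\<close>] .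
  qed
  then show ?thesis
    using that r f0 by blast
qed

lemma disjoint_humps_vanish_along_subseq:
  fixes y :: "nat \<Rightarrow> 'b" and D :: "nat \<Rightarrow> 'a set"
  assumes y: "\<And>i. y i \<in> K" and D: "\<And>m. D m \<in> sets M" "disjoint_family D"
  obtains r where "strict_mono r" "(\<lambda>i. \<integral>x\<in>D (r i). H (y (r i)) x \<partial>M) \<longlonglongrightarrow> 0"
proof -
  obtain r f0 where r: "strict_mono r" and f0: "f0 \<in> K"
    and conv: "\<And>J. (\<lambda>i. \<integral>x\<in>(\<Union>m\<in>J. D m). H (y (r i)) x \<partial>M) \<longlonglongrightarrow> (\<integral>x\<in>(\<Union>m\<in>J. D m). H f0 x \<partial>M)"
    using setwise_convergent_subseq[of y D, OF y D] by blast
  define h where "h i x = H (y (r i)) x - H f0 x" for i x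
  have h: "integrable M (h i)" for i
    unfolding h_def using integrable y f0 by blast
  have h_diff: "(\<integral>x\<in>A. h i x \<partial>M) = (\<integral>x\<in>A. H (y (r i)) x \<partial>M) - (\<integral>x\<in>A. H f0 x \<partial>M)"
    if "A \<in> sets M" for i A
    unfolding h_def using integrable y f0 that by (intro set_integral_diff integrable_imp_set_integrable) auto
  define \<mu> where "\<mu> i J = (\<integral>x\<in>(\<Union>m\<in>J. D m). h i x \<partial>M)" for i J
  have "(\<lambda>i. \<mu> i {r i}) \<longlonglongrightarrow> 0"
  proof (rule gliding_hump)
    show "\<mu> i (A \<union> B) = \<mu> i A + \<mu> i B" if "A \<inter> B = {}" for i A B
      unfolding \<mu>_def using set_integral_UN_Un[where D=D, OF h D that] .
    show "(\<lambda>i. \<mu> i J) \<longlonglongrightarrow> 0" for J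
      unfolding \<mu>_def h_diff[OF sets_UN_nat[where D=D, OF D(1)]]
      using tendsto_diff[OF conv[of J] tendsto_const[of "\<integral>x\<in>(\<Union>m\<in>J. D m). H f0 x \<partial>M"]] by simp
    show "\<exists>N. \<forall>J\<subseteq>{N..}. \<bar>\<mu> i J\<bar> < \<epsilon>" if "\<epsilon> > 0" for i \<epsilon>
      unfolding \<mu>_def using set_integral_disjoint_tails_small[where D=D, OF h D that] .
    show "filterlim r at_top sequentially"
      using r by (rule filterlim_subseq)
  qed
  moreover have "(\<lambda>i. \<integral>x\<in>D (r i). H f0 x \<partial>M) \<longlonglongrightarrow> 0"
    using LIMSEQ_subseq_LIMSEQ[OF set_integral_disjoint_tendsto_0[where D=D, OF integrable[OF f0] D] r]
    by (simp add: comp_def)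
  ultimately have "(\<lambda>i. \<mu> i {r i} + (\<integral>x\<in>D (r i). H f0 x \<partial>M)) \<longlonglongrightarrow> 0 + 0"
    by (rule tendsto_add)
  then show ?thesis
    using that r D(1) by (simp add: \<mu>_def h_diff)
qed

theorem uniformly_absolutely_continuous:
  assumes "e > 0"
  shows "\<exists>d>0. \<forall>f\<in>K. \<forall>A\<in>sets M. measure M A < d \<longrightarrow> \<bar>\<integral>x\<in>A. H f x \<partial>M\<bar> \<le> e"
proof (rule ccontr)
  assume "\<not> ?thesis"
  then have large: "\<exists>f\<in>K. \<exists>A\<in>sets M. measure M A < d \<and> e < \<bar>\<integral>x\<in>A. H f x \<partial>M\<bar>"
    if "d > 0" for d
    using that by (auto simp: not_le)
  obtain y :: "nat \<Rightarrow> 'b" and D :: "nat \<Rightarrow> 'a set"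
    where y: "\<And>m. y m \<in> K" and D: "\<And>m. D m \<in> sets M" "disjoint_family D"
      and humps: "\<And>m. e/2 < \<bar>\<integral>x\<in>D m. H (y m) x \<partial>M\<bar>"
    using finite_measure.extract_disjoint_humps[where K=K and H=H and e=e,
        OF finite_measure integrable \<open>e > 0\<close> large] by blast
  obtain r where "(\<lambda>i. \<integral>x\<in>D (r i). H (y (r i)) x \<partial>M) \<longlonglongrightarrow> 0"
    using disjoint_humps_vanish_along_subseq[of y D, OF y D] by blast
  then have "\<forall>\<^sub>F i in sequentially. \<bar>\<integral>x\<in>D (r i). H (y (r i)) x \<partial>M\<bar> < e/2"
    using \<open>e > 0\<close> by (intro order_tendstoD(2)[OF tendsto_rabs_zero]) auto
  then obtain i where "\<bar>\<integral>x\<in>D (r i). H (y (r i)) x \<partial>M\<bar> < e/2"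
    using eventually_happens'[OF sequentially_bot] by blast
  with humps[of "r i"] show False
    by linarith
qed

lemma uniformly_integrable_image:
  assumes "\<And>f. f \<in> K \<Longrightarrow> (\<integral>x. \<bar>H f x\<bar> \<partial>M) \<le> C"
  shows "uniformly_integrable M (H ` K)"
proof (rule finite_measure.uniformly_integrableI[OF finite_measure])
  show "integrable M h" if "h \<in> H ` K" for h
    using integrable that by blast
  show "(\<integral>x. \<bar>h x\<bar> \<partial>M) \<le> C" if "h \<in> H ` K" for h
    using assms that by blast
  show "\<exists>d>0. \<forall>h\<in>H ` K. \<forall>A\<in>sets M. measure M A < d \<longrightarrow> \<bar>\<integral>x\<in>A. h x \<partial>M\<bar> \<le> e" if "e > 0" for e
    using uniformly_absolutely_continuous[OF that] by blast
qed

end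

section \<open>Koethe topologies\<close>

lemma continuous_map_weak_top_pairing:
  assumes "g \<in> F"
  shows "continuous_map (weak_top M E F) euclideanreal (\<lambda>f. pairing M f g)"
proof -
  let ?S = "{{f \<in> E. pairing M f g \<in> U} | g U. g \<in> F \<and> open U}"
  have "topspace (weak_top M E F) = E"
    unfolding weak_top_def topology_generated_by_topspace by blast
  moreover have "openin (weak_top M E F) {f \<in> E. pairing M f g \<in> U}" if "open U" for U
  proof -
    have "{f \<in> E. pairing M f g \<in> U} \<in> insert E ?S"
      using assms that by blast
    then show ?thesis
      unfolding weak_top_def by (rule topology_generated_by_Basis)
  qed
  ultimately show ?thesis
    unfolding continuous_map_def by auto
qed

lemma continuous_map_weak_top_set_integral:
  assumes "solid M F" "g \<in> F" "g \<in> borel_measurable M" "A \<in> sets M"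
  shows "continuous_map (weak_top M E F) euclideanreal (\<lambda>f. \<integral>x\<in>A. f x * g x \<partial>M)"
proof -
  have "(\<lambda>x. indicator A x * g x) \<in> F"
    using assms unfolding solid_def by (auto split: split_indicator)
  then have "continuous_map (weak_top M E F) euclideanreal (\<lambda>f. pairing M f (\<lambda>x. indicator A x * g x))"
    by (rule continuous_map_weak_top_pairing)
  moreover have "pairing M f (\<lambda>x. indicator A x * g x) = (\<integral>x\<in>A. f x * g x \<partial>M)" for f
    unfolding pairing_def set_lebesgue_integral_def by (simp add: mult_ac)
  ultimately show ?thesis
    by simp
qed

lemma polar_integrable:
  assumes "v \<in> polar M K" "f \<in> K" "f \<in> borel_measurable M"
  shows "integrable M (\<lambda>x. f x * v x)" and "(\<integral>x. \<bar>f x * v x\<bar> \<partial>M) \<le> 1"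
proof -
  have [measurable]: "v \<in> borel_measurable M" and le: "(\<integral>\<^sup>+x. ennreal \<bar>f x * v x\<bar> \<partial>M) \<le> 1"
    using assms unfolding polar_def by auto
  show int: "integrable M (\<lambda>x. f x * v x)"
    using le assms(3) by (intro integrableI_bounded) (auto simp: top.not_eq_extremum intro: le_less_trans)
  have "(\<integral>\<^sup>+x. ennreal \<bar>f x * v x\<bar> \<partial>M) = ennreal (\<integral>x. \<bar>f x * v x\<bar> \<partial>M)"
    using int by (intro nn_integral_eq_integral) auto
  then show "(\<integral>x. \<bar>f x * v x\<bar> \<partial>M) \<le> 1"
    using le by simp
qed

lemma E'_K_integrable_bounded:
  assumes "g \<in> E'_K M K" "K \<subseteq> borel_measurable M"
  shows "\<exists>C. \<forall>f\<in>K. integrable M (\<lambda>x. f x * g x) \<and> (\<integral>x. \<bar>f x * g x\<bar> \<partial>M) \<le> C"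
proof -
  obtain I :: "nat set" and c v where [measurable]: "g \<in> borel_measurable M"
    and I: "finite I" "v ` I \<subseteq> polar M K" and ae: "AE x in M. g x = (\<Sum>i\<in>I. c i * v i x)"
    using assms(1) unfolding E'_K_def L0_span_def lin_span_def by blast
  have "integrable M (\<lambda>x. f x * g x) \<and> (\<integral>x. \<bar>f x * g x\<bar> \<partial>M) \<le> (\<Sum>i\<in>I. \<bar>c i\<bar>)" if f: "f \<in> K" for f
  proof -
    have [measurable]: "f \<in> borel_measurable M"
      using f assms(2) by auto
    have v: "integrable M (\<lambda>x. f x * v i x)" "(\<integral>x. \<bar>f x * v i x\<bar> \<partial>M) \<le> 1" if "i \<in> I" for i
      using polar_integrable[of "v i" M K f] I that f assms(2) by auto
    define s where "s x = (\<Sum>i\<in>I. c i * (f x * v i x))" for x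
    have s: "integrable M s"
      unfolding s_def using v by (intro Bochner_Integration.integrable_sum integrable_mult_right) auto
    have ae_s: "AE x in M. f x * g x = s x"
      using ae by eventually_elim (simp add: s_def sum_distrib_left mult_ac)
    have "integrable M (\<lambda>x. f x * g x)"
      using integrable_cong_AE[OF _ borel_measurable_integrable[OF s] ae_s] s by simp
    moreover have "(\<integral>x. \<bar>f x * g x\<bar> \<partial>M) = (\<integral>x. \<bar>s x\<bar> \<partial>M)"
      using s ae_s by (intro integral_cong_AE) auto
    moreover have "(\<integral>x. \<bar>s x\<bar> \<partial>M) \<le> (\<integral>x. (\<Sum>i\<in>I. \<bar>c i\<bar> * \<bar>f x * v i x\<bar>) \<partial>M)"
      unfolding s_def using v
      by (intro Bochner_Integration.integral_mono Bochner_Integration.integrable_sum integrable_mult_right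
          integrable_abs) (auto intro!: order_trans[OF sum_abs] simp: abs_mult)
    moreover have "\<dots> = (\<Sum>i\<in>I. \<bar>c i\<bar> * (\<integral>x. \<bar>f x * v i x\<bar> \<partial>M))"
      using v by (subst Bochner_Integration.integral_sum) (auto intro!: integrable_mult_right integrable_abs)
    moreover have "\<dots> \<le> (\<Sum>i\<in>I. \<bar>c i\<bar>)"
      using v by (intro sum_mono mult_right_le_one_le) (auto simp: mult_left_le)
    ultimately show ?thesis
      by linarith
  qed
  then show ?thesis
    by blast
qed

lemma Koethe_setwise_compact:
  assumes "prob_space M" "ae_saturated M K" "equicontinuous_Koethe M K \<tau>" "induces M K \<tau> F" "g \<in> F"
  shows "setwise_compact M (subtopology (weak_top M (E_K M K) F) K) K (\<lambda>f x. f x * g x)"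
proof (rule setwise_compact.intro)
  show "finite_measure M"
    using assms(1) unfolding prob_space_def by blast
  have "K_bounded K K"
    unfolding K_bounded_def scaleset_def by (intro exI[of _ 1]) auto
  then have "subtopology \<tau> K = subtopology (weak_top M (E_K M K) F) K"
    using assms(4) unfolding induces_def by blast
  then show "compactin (subtopology (weak_top M (E_K M K) F) K) K"
    using assms(3) unfolding equicontinuous_Koethe_def by (metis compactin_subtopology subset_refl)
  have "solid M F" and g: "g \<in> E'_K M K" "g \<in> borel_measurable M"
    using assms(4,5) unfolding induces_def E'_K_def L0_span_def by auto
  have "K \<subseteq> borel_measurable M"
    using assms(2) unfolding ae_saturated_def by blast
  then show "integrable M (\<lambda>x. f x * g x)" if "f \<in> K" for f
    using E'_K_integrable_bounded[OF g(1)] that by blast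
  show "continuous_map (subtopology (weak_top M (E_K M K) F) K) euclideanreal (\<lambda>f. \<integral>x\<in>A. f x * g x \<partial>M)"
    if "A \<in> sets M" for A
    using continuous_map_weak_top_set_integral[OF \<open>solid M F\<close> assms(5) g(2) that]
    by (rule continuous_map_from_subtopology)
qed

theorem lemma5p8:
  fixes M :: "'a measure" and K :: "('a \<Rightarrow> real) set"
    and \<tau> :: "('a \<Rightarrow> real) topology" and F :: "('a \<Rightarrow> real) set"
  assumes "prob_space M" and "complete_measure M"
    and "ae_saturated M K"
    and "absolutely_convex K" and "closed_in_prob M K" and "bounded_in_prob M K"
    and "L0_topology M (E_K M K) \<tau>"
    and "locally_convex_top (E_K M K) \<tau>"
    and "equicontinuous_Koethe M K \<tau>"
    and "Krein_Smulian M K \<tau>"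
    and "F_regular M K \<tau> F"
  shows "\<forall>g\<in>F. uniformly_integrable M {(\<lambda>x. f x * g x) | f. f \<in> K}"
proof
  \<comment> \<open>only prob_space, ae_saturated, equicontinuous_Koethe and the induces part of F_regular are used\<close>
  fix g assume "g \<in> F"
  have induces: "induces M K \<tau> F"
    using assms(11) unfolding F_regular_def by blast
  interpret setwise_compact M "subtopology (weak_top M (E_K M K) F) K" K "\<lambda>f x. f x * g x"
    using Koethe_setwise_compact[OF assms(1,3,9) induces \<open>g \<in> F\<close>] .
  have "g \<in> E'_K M K" and "K \<subseteq> borel_measurable M"
    using induces \<open>g \<in> F\<close> assms(3) unfolding induces_def ae_saturated_def by auto
  then obtain C where "\<forall>f\<in>K. integrable M (\<lambda>x. f x * g x) \<and> (\<integral>x. \<bar>f x * g x\<bar> \<partial>M) \<le> C"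
    using E'_K_integrable_bounded by blast
  then have "uniformly_integrable M ((\<lambda>f x. f x * g x) ` K)"
    by (intro uniformly_integrable_image) blast
  then show "uniformly_integrable M {(\<lambda>x. f x * g x) | f. f \<in> K}"
    by (simp add: Setcompr_eq_image)
qed

end
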